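(* For any strings $S_1,S_2,S_3\in\Sigma^*$: (i) $\mathrm{RSD}(S_1,S_2)=\mathrm{RSD}(S_2,S_1)$; (ii) $0\le \mathrm{RSD}(S_1,S_2)\le 1$; (iii) $\mathrm{RSD}(S_1,S_2)=0$ if and only if $S_1=S_2$; (iv) $\mathrm{RSD}(S_1,S_3)\le \mathrm{RSD}(S_1,S_2)+\mathrm{RSD}(S_2,S_3)$. In particular $\mathrm{RSD}$ is a metric on any set of strings.
   Context: $\mathrm{ED}(c,c')$ is the minimum number of insertions and deletions transforming $c$ into $c'$. For a string $S$ of length $n$ and integers $i\le j$, $S[i,j]$ is the substring from position $i$ through $j$, $S(i,j]=S[i+1,j]$; if $i<1$ then $S[i,j]$ denotes $\bot^{-i+1}\cdot S[1,j]$ where $\bot$ is a special symbol not in $\Sigma$ (padding on the left). The relative suffix distance is $\mathrm{RSD}(S,S')=\max_{k>0}\frac{\mathrm{ED}\big(S(|S|-k,|S|],\,S'(|S'|-k,|S'|]\big)}{2k}$. *)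

theory Defs
  imports Complex_Main
begin

definition indel_step :: "'b list \<Rightarrow> 'b list \<Rightarrow> bool" where
  "indel_step x y \<longleftrightarrow>
     (\<exists>u v c. x = u @ v \<and> y = u @ c # v) \<or> (\<exists>u v c. x = u @ c # v \<and> y = u @ v)"

definition ED :: "'b list \<Rightarrow> 'b list \<Rightarrow> nat" where
  "ED x y = (LEAST n. (indel_step ^^ n) x y)"

(* S(|S|-k, |S|], padded on the left with the special symbol \<bottom> = None \<notin> Some ` \<Sigma> *)
definition padded_suffix :: "nat \<Rightarrow> 'a list \<Rightarrow> 'a option list" where
  "padded_suffix k S = replicate (k - length S) None @ map Some (drop (length S - k) S)"

definition RSD :: "'a list \<Rightarrow> 'a list \<Rightarrow> real" where
  "RSD S S' = (SUP k\<in>{0<..}. real (ED (padded_suffix k S) (padded_suffix k S')) / (2 * real k))"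

end

theory Submission
  imports Defs
begin

text \<open>Insertion-deletion distance is a metric on lists, because indel steps are symmetric and
  edit paths compose. For a fixed window length k the term ED(S(|S|-k,|S|], S'(|S'|-k,|S'|])/2k
  therefore satisfies symmetry and the triangle inequality, and it is at most 1 since a word of
  length k can be deleted and another one inserted in 2k steps; all these properties pass to the
  supremum. Finally, once k exceeds both lengths the padded suffixes determine the strings, so
  distance 0 forces equality.\<close>

lemma symp_relpowp: "symp r \<Longrightarrow> symp (r ^^ n)"
proof (induction n)
  case 0
  then show ?case by (simp add: sympI)
next
  case (Suc n)
  show ?case
  proof (rule sympI)
    fix x y assume "(r ^^ Suc n) x y"
    then obtain z where "(r ^^ n) x z" "r z y" by (rule relpowp_Suc_E)
    then have "r y z" "(r ^^ n) z x" using Suc by (auto dest: sympD)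
    then show "(r ^^ Suc n) y x" by (rule relpowp_Suc_I2)
  qed
qed

lemma symp_indel_step: "symp indel_step"
  unfolding indel_step_def by (rule sympI) blast

lemma relpowp_indel_step_delete_all: "(indel_step ^^ length x) x []"
proof (induction x)
  case Nil
  then show ?case by simp
next
  case (Cons c v)
  have "indel_step (c # v) v"
    unfolding indel_step_def by (metis append_Nil)
  with Cons show ?case by (metis length_Cons relpowp_Suc_I2)
qed

lemma relpowp_indel_step_length_add: "(indel_step ^^ (length x + length y)) x y"
  using relpowp_indel_step_delete_all[of x]
    sympD[OF symp_relpowp[OF symp_indel_step] relpowp_indel_step_delete_all[of y]]
  by (rule relpowp_trans)

lemma relpowp_ED: "(indel_step ^^ ED x y) x y"
  unfolding ED_def by (rule LeastI, rule relpowp_indel_step_length_add)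

lemma ED_le: "(indel_step ^^ n) x y \<Longrightarrow> ED x y \<le> n"
  unfolding ED_def by (rule Least_le)

lemma ED_le_length_add: "ED x y \<le> length x + length y"
  by (rule ED_le, rule relpowp_indel_step_length_add)

lemma ED_commute: "ED x y = ED y x"
  using ED_le relpowp_ED sympD[OF symp_relpowp[OF symp_indel_step]] by (metis le_antisym)

lemma ED_triangle: "ED x z \<le> ED x y + ED y z"
  by (rule ED_le, rule relpowp_trans[OF relpowp_ED relpowp_ED])

lemma ED_eq_0_iff: "ED x y = 0 \<longleftrightarrow> x = y"
  using relpowp_ED[of x y] ED_le[of 0 x x] by auto

lemma length_padded_suffix: "length (padded_suffix k S) = k"
  unfolding padded_suffix_def by simp

lemma padded_suffix_eq_imp_eq:
  assumes "padded_suffix k S = padded_suffix k S'" and "length S \<le> k" and "length S' \<le> k"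
  shows "S = S'"
proof -
  have "removeAll None (padded_suffix k T) = map Some T" if "length T \<le> k" for T :: "'a list"
    using that unfolding padded_suffix_def by (simp add: removeAll_filter_not_eq filter_map comp_def)
  with assms have "map Some S = map Some S'" by metis
  then show ?thesis by (simp add: inj_map_eq_map)
qed

definition suffix_distance :: "'a list \<Rightarrow> 'a list \<Rightarrow> nat \<Rightarrow> real" where
  "suffix_distance S S' k = real (ED (padded_suffix k S) (padded_suffix k S')) / (2 * real k)"

lemma RSD_eq_SUP_suffix_distance: "RSD S S' = (SUP k\<in>{0<..}. suffix_distance S S' k)"
  unfolding RSD_def suffix_distance_def by simp

lemma suffix_distance_nonneg: "0 \<le> suffix_distance S S' k"
  unfolding suffix_distance_def by simp

lemma suffix_distance_le_1: "suffix_distance S S' k \<le> 1"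
proof -
  have "ED (padded_suffix k S) (padded_suffix k S') \<le> 2 * k"
    using ED_le_length_add[of "padded_suffix k S" "padded_suffix k S'"]
    by (simp add: length_padded_suffix)
  then show ?thesis
    unfolding suffix_distance_def by (cases "k = 0") (simp_all add: divide_le_eq)
qed

lemma suffix_distance_commute: "suffix_distance S S' k = suffix_distance S' S k"
  unfolding suffix_distance_def by (simp add: ED_commute)

lemma suffix_distance_triangle:
  "suffix_distance S1 S3 k \<le> suffix_distance S1 S2 k + suffix_distance S2 S3 k"
proof -
  have "real (ED (padded_suffix k S1) (padded_suffix k S3))
      \<le> real (ED (padded_suffix k S1) (padded_suffix k S2))
        + real (ED (padded_suffix k S2) (padded_suffix k S3))"
    using ED_triangle by (metis of_nat_add of_nat_mono)
  then show ?thesis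
    unfolding suffix_distance_def by (simp add: add_divide_distrib[symmetric] divide_right_mono)
qed

lemma suffix_distance_eq_0_iff:
  assumes "0 < k" and "length S \<le> k" and "length S' \<le> k"
  shows "suffix_distance S S' k = 0 \<longleftrightarrow> S = S'"
  using assms padded_suffix_eq_imp_eq
  by (auto simp: suffix_distance_def ED_eq_0_iff)

lemma suffix_distance_le_RSD: "0 < k \<Longrightarrow> suffix_distance S S' k \<le> RSD S S'"
  unfolding RSD_eq_SUP_suffix_distance
  by (rule cSUP_upper) (auto intro!: bdd_aboveI[of _ 1] suffix_distance_le_1)

lemma RSD_commute: "RSD S S' = RSD S' S"
  unfolding RSD_eq_SUP_suffix_distance by (simp add: suffix_distance_commute)

lemma RSD_nonneg: "0 \<le> RSD S S'"
  using suffix_distance_le_RSD[of 1 S S'] suffix_distance_nonneg[of S S' 1] by simp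

lemma RSD_le_1: "RSD S S' \<le> 1"
  unfolding RSD_eq_SUP_suffix_distance by (rule cSUP_least) (auto intro: suffix_distance_le_1)

lemma RSD_triangle: "RSD S1 S3 \<le> RSD S1 S2 + RSD S2 S3"
  unfolding RSD_eq_SUP_suffix_distance[of S1 S3]
proof (rule cSUP_least)
  fix k :: nat assume "k \<in> {0<..}"
  then show "suffix_distance S1 S3 k \<le> RSD S1 S2 + RSD S2 S3"
    using suffix_distance_triangle[of S1 S3 k S2]
      suffix_distance_le_RSD[of k S1 S2] suffix_distance_le_RSD[of k S2 S3] by simp
qed simp

lemma RSD_eq_0_iff: "RSD S S' = 0 \<longleftrightarrow> S = S'"
proof
  assume "RSD S S' = 0"
  moreover define k where "k = Suc (length S + length S')"
  ultimately have "suffix_distance S S' k = 0"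
    using suffix_distance_le_RSD[of k S S'] suffix_distance_nonneg[of S S' k] by simp
  then show "S = S'" using suffix_distance_eq_0_iff[of k S S'] k_def by simp
next
  assume "S = S'"
  then have "suffix_distance S S' k = 0" for k
    unfolding suffix_distance_def by (simp add: ED_eq_0_iff)
  then show "RSD S S' = 0"
    unfolding RSD_eq_SUP_suffix_distance by simp
qed

theorem lemma14:
  fixes S1 S2 S3 :: "'a list"
  shows "RSD S1 S2 = RSD S2 S1
    \<and> (0 \<le> RSD S1 S2 \<and> RSD S1 S2 \<le> 1)
    \<and> (RSD S1 S2 = 0 \<longleftrightarrow> S1 = S2)
    \<and> RSD S1 S3 \<le> RSD S1 S2 + RSD S2 S3"
  using RSD_commute RSD_nonneg RSD_le_1 RSD_eq_0_iff RSD_triangle by blast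

end
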